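(* Let $p$ be a prime and let $(\mathbb{K},|\cdot|_{\mathbb{K}})$ be a valued field with $\mathbb{Q}_p\subseteq\mathbb{K}$ such that the inclusion $\mathbb{Q}_p\hookrightarrow\mathbb{K}$ is continuous. Let $f:\mathbb{Q}_p\to\mathbb{K}$ be continuous, $n\ge0$, and $N\in\mathbb{N}$. If $\Delta_{p^N}^{n+1}f(x)=0$ for all $x\in\mathbb{Q}_p$, then for each $a\in\mathbb{Q}_p$ there exist constants $a_0,\dots,a_n\in\mathbb{K}$ such that $f(x)=a_0+a_1x+\cdots+a_nx^n$ for all $x\in a+p^N\mathbb{Z}_p$.
   Context: $\mathbb{Q}_p$ is the field of $p$-adic numbers, $\mathbb{Z}_p=\{x\in\mathbb{Q}_p:|x|_p\le1\}$, and $a+p^N\mathbb{Z}_p=\{a+p^Nz:z\in\mathbb{Z}_p\}$. $\Delta_h^{m}f(x)=\sum_{k=0}^{m}\binom{m}{k}(-1)^{m-k}f(x+kh)$. *)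

theory Defs
  imports Complex_Main "HOL-Computational_Algebra.Computational_Algebra"
begin

definition padic_val_rat :: "nat \<Rightarrow> rat \<Rightarrow> int" where
  "padic_val_rat p r =
     int (multiplicity (int p) (fst (quotient_of r))) -
     int (multiplicity (int p) (snd (quotient_of r)))"

definition padic_abs_rat :: "nat \<Rightarrow> rat \<Rightarrow> real" where
  "padic_abs_rat p r = (if r = 0 then 0 else real p powr (- real_of_int (padic_val_rat p r)))"

definition is_absval :: "('a::field \<Rightarrow> real) \<Rightarrow> bool" where
  "is_absval av \<longleftrightarrow>
     (\<forall>x. 0 \<le> av x) \<and> (\<forall>x. av x = 0 \<longleftrightarrow> x = 0) \<and>
     (\<forall>x y. av (x * y) = av x * av y) \<and> (\<forall>x y. av (x + y) \<le> av x + av y)"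

text \<open>(Q, av) is a model of Q_p: the completion of the rationals with respect to the
  p-adic absolute value (complete, extends the p-adic absolute value on Q, Q dense).\<close>
definition is_padic_field :: "nat \<Rightarrow> ('q::field_char_0 \<Rightarrow> real) \<Rightarrow> bool" where
  "is_padic_field p av \<longleftrightarrow>
     is_absval av \<and>
     (\<forall>r. av (of_rat r) = padic_abs_rat p r) \<and>
     (\<forall>x e. e > 0 \<longrightarrow> (\<exists>r. av (x - of_rat r) < e)) \<and>
     (\<forall>X :: nat \<Rightarrow> 'q.
        (\<forall>e>0. \<exists>M. \<forall>m\<ge>M. \<forall>n\<ge>M. av (X m - X n) < e) \<longrightarrow>
        (\<exists>L. \<forall>e>0. \<exists>M. \<forall>n\<ge>M. av (X n - L) < e))"

definition abs_continuous ::
  "('a \<Rightarrow> real) \<Rightarrow> ('b \<Rightarrow> real) \<Rightarrow> ('a::ab_group_add \<Rightarrow> 'b::ab_group_add) \<Rightarrow> bool" where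
  "abs_continuous avA avB g \<longleftrightarrow>
     (\<forall>x e. e > 0 \<longrightarrow> (\<exists>d>0. \<forall>y. avA (y - x) < d \<longrightarrow> avB (g y - g x) < e))"

definition field_embedding :: "('a::field \<Rightarrow> 'b::field) \<Rightarrow> bool" where
  "field_embedding i \<longleftrightarrow> inj i \<and> (\<forall>x y. i (x + y) = i x + i y) \<and>
     (\<forall>x y. i (x * y) = i x * i y) \<and> i 1 = 1"

definition fdiff :: "'a::semiring_1 \<Rightarrow> nat \<Rightarrow> ('a \<Rightarrow> 'b::ring_1) \<Rightarrow> 'a \<Rightarrow> 'b" where
  "fdiff h m f x = (\<Sum>k=0..m. of_nat (m choose k) * (-1) ^ (m - k) * f (x + of_nat k * h))"

end

theory Submission
  imports Defs "HOL-Number_Theory.Cong"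
begin

(* Let h = p^N and suppose the (n+1)-st difference of f with step h vanishes.  For fixed a,
   the sequence g j = f (a + j h) then has vanishing (n+1)-st difference with step 1, so by
   the discrete Taylor expansion it is a combination of the binomial polynomials (j choose i),
   i \<le> n; after the affine change of variable j = (x - a) / h this gives a polynomial Q of
   degree \<le> n with f x = Q (incl x) at every point x = a + j h of the progression.  Since
   the natural numbers are dense in Z_p and |h| \<le> 1, the progression is dense in the ball
   a + h Z_p; as both f and Q \<circ> incl are continuous they agree on the whole ball. *)

lemma absval_props:
  fixes av :: "'a::field \<Rightarrow> real"
  assumes "is_absval av"
  shows absval_nonneg: "0 \<le> av x"
    and absval_eq_0: "av x = 0 \<longleftrightarrow> x = 0"
    and absval_mult: "av (x * y) = av x * av y"
    and absval_triangle: "av (x + y) \<le> av x + av y"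
    and absval_one: "av 1 = 1"
    and absval_minus: "av (- x) = av x"
proof -
  note A = assms[unfolded is_absval_def]
  show "0 \<le> av x" "av x = 0 \<longleftrightarrow> x = 0" "av (x * y) = av x * av y" "av (x + y) \<le> av x + av y"
    using A by auto
  have "av 1 * av 1 = av 1" "av 1 \<noteq> 0" using A by (metis mult_1, simp)
  then show one: "av 1 = 1" by simp
  have "av (-1) * av (-1) = 1" "av (-1) \<ge> 0" using A one by (metis mult_minus1 minus_minus, simp)
  then have "av (-1) = 1" by (metis abs_of_nonneg abs_square_eq_1 power2_eq_square)
  then show "av (- x) = av x" using A by (metis mult_minus1 mult_1 mult_minus_left)
qed

lemma absval_diff_triangle:
  assumes "is_absval (av :: 'a::field \<Rightarrow> real)"
  shows "av (a - c) \<le> av (a - b) + av (b - c)"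
  using absval_triangle[OF assms, of "a - b" "b - c"] by simp

lemma absval_diff_commute:
  assumes "is_absval (av :: 'a::field \<Rightarrow> real)"
  shows "av (a - b) = av (b - a)"
  using absval_minus[OF assms, of "a - b"] by simp

lemma absval_power:
  assumes "is_absval (av :: 'a::field \<Rightarrow> real)"
  shows "av (x ^ n) = av x ^ n"
  by (induction n) (simp_all add: absval_one[OF assms] absval_mult[OF assms])

lemma absval_divide:
  assumes "is_absval (av :: 'a::field \<Rightarrow> real)"
  shows "av (x / y) = av x / av y"
proof (cases "y = 0")
  case False
  then have "av (x / y) * av y = av x" "av y \<noteq> 0"
    using absval_mult[OF assms, of "x / y" y] absval_eq_0[OF assms, of y] by simp_all
  then show ?thesis by (simp add: field_simps)
qed (use absval_eq_0[OF assms, of 0] in simp)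

lemma fdiff_diff:
  fixes f g :: "'a::semiring_1 \<Rightarrow> 'b::ring_1"
  shows "fdiff h m (\<lambda>y. f y - g y) x = fdiff h m f x - fdiff h m g x"
  unfolding fdiff_def by (simp add: algebra_simps sum_subtractf)

lemma fdiff_split_first:
  fixes f :: "'a::semiring_1 \<Rightarrow> 'b::ring_1"
  shows "fdiff h m f x = (-1) ^ m * f x
    - (\<Sum>k\<le>m. of_nat (m choose Suc k) * (-1) ^ (m - k) * f (x + of_nat (Suc k) * h))"
proof -
  have sign: "(-1) ^ (m - Suc k) = - ((-1) ^ (m - k) :: 'b)" if "k < m" for k
    using that by (simp add: Suc_diff_Suc[symmetric])
  have "fdiff h m f x = (-1) ^ m * f x
      + (\<Sum>k<m. of_nat (m choose Suc k) * (-1) ^ (m - Suc k) * f (x + of_nat (Suc k) * h))"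
  proof (cases m)
    case (Suc m')
    show ?thesis unfolding fdiff_def atLeast0AtMost Suc
      by (subst sum.atMost_Suc_shift) (simp add: lessThan_Suc_atMost del: binomial_Suc_Suc)
  qed (simp add: fdiff_def)
  also have "(\<Sum>k<m. of_nat (m choose Suc k) * (-1) ^ (m - Suc k) * f (x + of_nat (Suc k) * h))
      = - (\<Sum>k\<le>m. of_nat (m choose Suc k) * (-1) ^ (m - k) * f (x + of_nat (Suc k) * h))"
    by (simp add: sign sum_negf lessThan_Suc_atMost[symmetric] binomial_eq_0)
  finally show ?thesis by simp
qed

text \<open>Pascal's rule turns the binomial formula into the recursion
  \<open>fdiff h (m+1) f x = fdiff h m f (x + h) - fdiff h m f x\<close>.\<close>
lemma fdiff_Suc:
  fixes f :: "'a::semiring_1 \<Rightarrow> 'b::ring_1"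
  shows "fdiff h (Suc m) f x = fdiff h m f (x + h) - fdiff h m f x"
proof -
  define t where "t k = f (x + of_nat (Suc k) * h)" for k
  have upper: "fdiff h m f (x + h) = (\<Sum>k\<le>m. of_nat (m choose k) * (-1) ^ (m - k) * t k)"
    by (simp add: fdiff_def atLeast0AtMost t_def algebra_simps)
  have "fdiff h (Suc m) f x
      = (-1) ^ Suc m * f x + (\<Sum>k\<le>m. of_nat (Suc m choose Suc k) * (-1) ^ (m - k) * t k)"
    unfolding fdiff_def atLeast0AtMost by (subst sum.atMost_Suc_shift) (simp add: t_def)
  also have "\<dots> = (-1) ^ Suc m * f x + fdiff h m f (x + h)
      + (\<Sum>k\<le>m. of_nat (m choose Suc k) * (-1) ^ (m - k) * t k)"
    unfolding upper by (simp add: sum.distrib[symmetric] distrib_right)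
  finally show ?thesis by (simp add: fdiff_split_first[of h m f x] t_def)
qed

lemma fdiff_Suc_inner:
  fixes f :: "'a::semiring_1 \<Rightarrow> 'b::ring_1"
  shows "fdiff h (Suc m) f x = fdiff h m (\<lambda>y. f (y + h) - f y) x"
  by (simp add: fdiff_Suc fdiff_diff) (simp add: fdiff_def algebra_simps)

lemma fdiff_along_progression:
  fixes f :: "'a::semiring_1 \<Rightarrow> 'b::ring_1"
  shows "fdiff (1::nat) m (\<lambda>j. f (a + of_nat j * h)) j = fdiff h m f (a + of_nat j * h)"
  unfolding fdiff_def by (simp add: algebra_simps)

text \<open>Discrete Taylor expansion: a sequence whose \<open>(n+1)\<close>-st difference vanishes is a linear
  combination of \<open>j choose i\<close>, \<open>i \<le> n\<close> (induction on \<open>n\<close>, telescoping the first difference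
  and using the hockey-stick identity).\<close>
lemma fdiff_zero_binomial_expansion:
  fixes g :: "nat \<Rightarrow> 'b::comm_ring_1"
  assumes "\<forall>j. fdiff 1 (Suc n) g j = 0"
  shows "\<exists>c. \<forall>j. g j = (\<Sum>i\<le>n. c i * of_nat (j choose i))"
  using assms
proof (induction n arbitrary: g)
  case 0
  then have "g (Suc j) = g j" for j
    using fdiff_Suc_inner[of 1 0 g j] by (simp add: fdiff_def)
  then have "g j = g 0" for j by (induction j) auto
  then show ?case by (intro exI[of _ "\<lambda>_. g 0"]) simp
next
  case (Suc n)
  have "\<forall>j. fdiff 1 (Suc n) (\<lambda>i. g (i + 1) - g i) j = 0"
    using Suc.prems fdiff_Suc_inner[of 1 "Suc n" g] by simp
  from Suc.IH[OF this] obtain c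
    where c: "\<forall>j. g (Suc j) - g j = (\<Sum>i\<le>n. c i * of_nat (j choose i))"
    by auto
  define c' where "c' i = (case i of 0 \<Rightarrow> g 0 | Suc i' \<Rightarrow> c i')" for i
  have "g j = (\<Sum>i\<le>Suc n. c' i * of_nat (j choose i))" for j
  proof -
    have hockey_stick: "(\<Sum>t<j. t choose i) = j choose Suc i" for i
      by (cases j) (simp_all add: lessThan_Suc_atMost sum_choose_upper)
    have "g j = g 0 + (\<Sum>t<j. g (Suc t) - g t)"
      by (simp add: sum_lessThan_telescope)
    also have "\<dots> = g 0 + (\<Sum>i\<le>n. c i * of_nat (\<Sum>t<j. t choose i))"
      using c by (simp add: sum.swap[of _ "{..<j}"] sum_distrib_left)
    also have "\<dots> = (\<Sum>i\<le>Suc n. c' i * of_nat (j choose i))"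
      by (subst sum.atMost_Suc_shift) (simp add: c'_def hockey_stick)
    finally show ?thesis .
  qed
  then show ?case by blast
qed

text \<open>In characteristic zero, \<open>j choose i\<close> is the value at \<open>j\<close> of a polynomial of degree \<open>\<le> i\<close>,
  built from \<open>(j choose i+1) = (j choose i) (j - i) / (i + 1)\<close>.\<close>
lemma binomial_polynomial:
  assumes char: "\<And>m. (of_nat (Suc m) :: 'k::field) \<noteq> 0"
  shows "\<exists>B :: 'k poly. degree B \<le> i \<and> (\<forall>k. poly B (of_nat k) = of_nat (k choose i))"
proof (induction i)
  case 0
  show ?case by (intro exI[of _ 1]) simp
next
  case (Suc i)
  then obtain B :: "'k poly"
    where B: "degree B \<le> i" "\<forall>k. poly B (of_nat k) = of_nat (k choose i)" by blast
  define B' where "B' = smult (1 / of_nat (Suc i)) (B * [:- of_nat i, 1:])"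
  have "degree (B * [:- of_nat i, 1:]) \<le> Suc i"
    using degree_mult_le[of B "[:- of_nat i, 1:]"] B(1) by simp
  then have "degree B' \<le> Suc i"
    unfolding B'_def using degree_smult_le le_trans by blast
  moreover have "poly B' (of_nat k) = of_nat (k choose Suc i)" for k
  proof -
    have absorption: "(k choose i) * (k - i) = Suc i * (k choose Suc i)"
      using binomial_absorption[of i k] binomial_absorb_comp[of k i] by (simp add: ac_simps)
    have "(of_nat (k choose i) :: 'k) * (of_nat k - of_nat i) = of_nat ((k choose i) * (k - i))"
      by (cases "i \<le> k") (simp_all add: of_nat_diff binomial_eq_0)
    also have "\<dots> = of_nat (Suc i) * of_nat (k choose Suc i)"
      by (simp only: absorption of_nat_mult)
    finally show ?thesis
      unfolding B'_def using B(2) char[of i] by (simp add: field_simps del: of_nat_Suc)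
  qed
  ultimately show ?case by blast
qed

lemma fdiff_zero_polynomial_sequence:
  fixes g :: "nat \<Rightarrow> 'k::field"
  assumes char: "\<And>m. (of_nat (Suc m) :: 'k) \<noteq> 0"
    and "\<forall>j. fdiff 1 (Suc n) g j = 0"
  shows "\<exists>P. degree P \<le> n \<and> (\<forall>j. g j = poly P (of_nat j))"
proof -
  obtain c where c: "\<forall>j. g j = (\<Sum>i\<le>n. c i * of_nat (j choose i))"
    using fdiff_zero_binomial_expansion assms(2) by blast
  obtain B where B: "\<And>i. degree (B i) \<le> i"
    "\<And>i k. poly (B i) (of_nat k) = (of_nat (k choose i) :: 'k)"
    using binomial_polynomial[OF char] by metis
  define P where "P = (\<Sum>i\<le>n. smult (c i) (B i))"
  have "degree P \<le> n"
    unfolding P_def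
  proof (rule degree_sum_le)
    show "degree (smult (c i) (B i)) \<le> n" if "i \<in> {..n}" for i
      using that B(1)[of i] degree_smult_le[of "c i" "B i"] by simp
  qed simp
  moreover have "g j = poly P (of_nat j)" for j
    using c B(2) by (simp add: P_def poly_sum)
  ultimately show ?thesis by blast
qed

lemma field_embedding_props:
  assumes "field_embedding (incl :: 'q::field_char_0 \<Rightarrow> 'k::field)"
  shows embedding_add: "incl (x + y) = incl x + incl y"
    and embedding_mult: "incl (x * y) = incl x * incl y"
    and embedding_of_nat: "incl (of_nat m) = of_nat m"
    and embedding_nonzero: "x \<noteq> 0 \<Longrightarrow> incl x \<noteq> 0"
    and embedding_char_0: "(of_nat (Suc m) :: 'k) \<noteq> 0"
proof -
  note E = assms[unfolded field_embedding_def]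
  show "incl (x + y) = incl x + incl y" "incl (x * y) = incl x * incl y" using E by auto
  have "incl 0 + 0 = incl 0 + incl 0" using E by (metis add_0 add_0_right)
  then have zero: "incl 0 = 0" by (simp only: add_left_cancel)
  show of_nat: "incl (of_nat m) = of_nat m" for m
    by (induction m) (use E zero in auto)
  have nonzero: "incl x \<noteq> 0" if "x \<noteq> 0" for x
    using E zero that by (metis injD)
  then show "x \<noteq> 0 \<Longrightarrow> incl x \<noteq> 0" .
  show "(of_nat (Suc m) :: 'k) \<noteq> 0"
    using nonzero[of "of_nat (Suc m)"] of_nat[of "Suc m"] by (simp del: of_nat_Suc)
qed

text \<open>Algebraic core: if the \<open>(n+1)\<close>-st difference of \<open>f\<close> with step \<open>h\<close>
  vanishes, then on the progression \<open>a + \<nat> h\<close> the function \<open>f\<close> is a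
  polynomial of degree \<open>\<le> n\<close> in \<open>incl x\<close>, obtained by the affine substitution \<open>j = (x - a) / h\<close>.\<close>
lemma fdiff_zero_polynomial_on_progression:
  fixes incl :: "'q::field_char_0 \<Rightarrow> 'k::field"
  assumes E: "field_embedding incl" and h: "h \<noteq> 0"
    and vanish: "\<forall>x. fdiff h (Suc n) f x = 0"
  shows "\<exists>Q. degree Q \<le> n \<and> (\<forall>j. f (a + of_nat j * h) = poly Q (incl (a + of_nat j * h)))"
proof -
  have "\<forall>j. fdiff 1 (Suc n) (\<lambda>j. f (a + of_nat j * h)) j = 0"
    unfolding fdiff_along_progression using vanish by simp
  then obtain P where P: "degree P \<le> n" "\<And>j. f (a + of_nat j * h) = poly P (of_nat j)"
    using fdiff_zero_polynomial_sequence[OF embedding_char_0[OF E]] by blast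
  have ih: "incl h \<noteq> 0" using embedding_nonzero[OF E h] .
  define Q where "Q = pcompose P [:- incl a / incl h, 1 / incl h:]"
  have "degree Q \<le> n"
    using degree_pcompose_le[of P "[:- incl a / incl h, 1 / incl h:]"] P(1) ih
    by (simp add: Q_def)
  moreover have "f (a + of_nat j * h) = poly Q (incl (a + of_nat j * h))" for j
  proof -
    have "incl (a + of_nat j * h) = incl a + of_nat j * incl h"
      using E by (simp add: embedding_add embedding_mult embedding_of_nat)
    then have "- incl a / incl h + incl (a + of_nat j * h) * (1 / incl h) = of_nat j"
      using ih by (simp add: field_simps)
    then show ?thesis by (simp add: Q_def poly_pcompose P(2))
  qed
  ultimately show ?thesis by blast
qed

lemma padic_abs_rat_of_int:
  assumes "prime p" "m \<noteq> 0"
  shows "padic_abs_rat p (of_int m) = real p powr (- real (multiplicity (int p) m))"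
  using assms by (simp add: padic_abs_rat_def padic_val_rat_def quotient_of_int)

lemma padic_abs_of_int:
  assumes "prime p" "is_padic_field p (absQ :: 'q::field_char_0 \<Rightarrow> real)" "m \<noteq> 0"
  shows "absQ (of_int m) = real p powr (- real (multiplicity (int p) m))"
  using assms padic_abs_rat_of_int unfolding is_padic_field_def by (metis of_rat_of_int_eq)

lemma padic_abs_of_int_le_1:
  assumes "prime p" "is_padic_field p (absQ :: 'q::field_char_0 \<Rightarrow> real)"
  shows "absQ (of_int m) \<le> 1"
proof (cases "m = 0")
  case True
  then show ?thesis
    using assms(2) absval_eq_0[of absQ 0] by (simp add: is_padic_field_def)
next
  case False
  have "real p \<ge> 1" using assms(1) prime_gt_0_nat by (simp add: Suc_leI)
  then have "real p powr (- real (multiplicity (int p) m)) \<le> 1"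
    by (simp add: powr_minus_divide ge_one_powr_ge_zero)
  then show ?thesis using padic_abs_of_int[OF assms False] by simp
qed

lemma padic_abs_of_prime:
  assumes "prime p" "is_padic_field p (absQ :: 'q::field_char_0 \<Rightarrow> real)"
  shows "absQ (of_nat p) = 1 / real p"
proof -
  have "prime (int p)" using assms(1) by simp
  then have "multiplicity (int p) (int p) = 1" "int p \<noteq> 0"
    using not_prime_unit[of "int p"] by (auto intro: multiplicity_self)
  then show ?thesis
    using padic_abs_of_int[OF assms, of "int p"] by (simp add: powr_minus_divide)
qed

lemma padic_abs_of_int_coprime:
  assumes "prime p" "is_padic_field p (absQ :: 'q::field_char_0 \<Rightarrow> real)" "\<not> int p dvd v"
  shows "absQ (of_int v) = 1"
proof -
  have "v \<noteq> 0" using assms(3) by auto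
  moreover have "multiplicity (int p) v = 0"
    using assms(3) by (simp add: not_dvd_imp_multiplicity_0)
  ultimately show ?thesis
    using padic_abs_of_int[OF assms(1,2)] assms(1) prime_gt_0_nat by simp
qed

lemma padic_small_rat_denominator:
  assumes p: "prime p" and small: "padic_abs_rat p r < real p"
    and uv: "quotient_of r = (u, v)"
  shows "\<not> int p dvd v"
proof
  assume pv: "int p dvd v"
  have "prime (int p)" using p by simp
  then have nu: "\<not> is_unit (int p)" using not_prime_unit by blast
  have v0: "v > 0" using uv quotient_of_denom_pos by blast
  have "multiplicity (int p) v > 0" using pv v0 nu multiplicity_gt_zero_iff[of v "int p"] by simp
  moreover have "r \<noteq> 0"
  proof
    assume "r = 0"
    then have "v = 1" using uv quotient_of_int[of 0] by simp
    then show False using pv nu by simp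
  qed
  moreover have "padic_val_rat p r \<ge> 0"
  proof -
    have "real p \<ge> 2" using p prime_ge_2_nat by (metis of_nat_le_iff of_nat_numeral)
    moreover have "real p powr (- real_of_int (padic_val_rat p r)) < real p powr 1"
      using small \<open>r \<noteq> 0\<close> by (simp add: padic_abs_rat_def)
    ultimately show ?thesis by (subst (asm) powr_less_cancel_iff) auto
  qed
  ultimately have "multiplicity (int p) u > 0" using uv by (simp add: padic_val_rat_def)
  then have "int p dvd u" using nu multiplicity_gt_zero_iff[of u "int p"] by (cases "u = 0") auto
  moreover have "coprime u v" using uv quotient_of_coprime by blast
  ultimately show False using pv nu coprime_common_divisor[of u v "int p"] by simp
qed

text \<open>A \<open>p\<close>-integral rational \<open>u/v\<close> is congruent to a natural number modulo \<open>p ^ M\<close>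
  (invert \<open>v\<close> modulo \<open>p ^ M\<close>), hence lies within distance \<open>1 / p ^ M\<close> of it.\<close>
lemma p_integral_rat_near_nat:
  fixes absQ :: "'q::field_char_0 \<Rightarrow> real"
  assumes P: "prime p" and Q: "is_padic_field p absQ"
    and uv: "quotient_of r = (u, v)" and ndvd: "\<not> int p dvd v"
  shows "\<exists>k::nat. absQ (of_rat r - of_nat k) \<le> (1 / real p) ^ M"
proof -
  have av: "is_absval absQ" using Q by (simp add: is_padic_field_def)
  have "coprime (int p) v" using P ndvd by (simp add: prime_imp_coprime)
  then have "coprime v (int p ^ M)" by (simp add: ac_simps)
  then obtain s where s: "[v * s = 1] (mod int p ^ M)" using cong_solve_coprime_int by blast
  define k where "k = nat ((u * s) mod (int p ^ M))"
  have k: "int k = (u * s) mod (int p ^ M)"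
    unfolding k_def using P by (simp add: prime_gt_0_nat)
  have "[int k * v = u * s * v] (mod int p ^ M)"
    unfolding k by (simp add: cong_def mod_mult_left_eq)
  also have "[u * s * v = u] (mod int p ^ M)"
    using cong_scalar_left[OF s, of u] by (simp add: ac_simps)
  finally have "int p ^ M dvd u - int k * v"
    by (simp add: cong_iff_dvd_diff dvd_diff_commute)
  then obtain w where w: "u - int k * v = int p ^ M * w" by blast
  have v0: "(of_int v :: 'q) \<noteq> 0" using uv quotient_of_denom_pos by fastforce
  have "(of_rat r :: 'q) = of_int u / of_int v"
    by (subst quotient_of_div[OF uv]) (simp add: of_rat_divide)
  then have "of_rat r - (of_nat k :: 'q) = of_int (u - int k * v) / of_int v"
    using v0 by (simp add: field_simps)
  also have "\<dots> = of_nat p ^ M * of_int w / of_int v" by (simp add: w)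
  finally have "absQ (of_rat r - of_nat k) = (1 / real p) ^ M * absQ (of_int w)"
    by (simp add: absval_divide[OF av] absval_mult[OF av] absval_power[OF av]
        padic_abs_of_prime[OF P Q] padic_abs_of_int_coprime[OF P Q ndvd])
  also have "\<dots> \<le> (1 / real p) ^ M"
    using padic_abs_of_int_le_1[OF P Q, of w] by (simp add: mult_left_le)
  finally show ?thesis by blast
qed

text \<open>The natural numbers are dense in \<open>\<int>\<^sub>p\<close>: approximate by a rational (density of \<open>\<rat>\<close>),
  which is then \<open>p\<close>-integral, and approximate that by a natural number.\<close>
lemma nat_dense_in_padic_unit_ball:
  fixes absQ :: "'q::field_char_0 \<Rightarrow> real"
  assumes P: "prime p" and Q: "is_padic_field p absQ" and z: "absQ z \<le> 1" and e: "e > 0"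
  shows "\<exists>k::nat. absQ (z - of_nat k) < e"
proof -
  have av: "is_absval absQ" using Q by (simp add: is_padic_field_def)
  have p2: "real p \<ge> 2" using P prime_ge_2_nat by (metis of_nat_le_iff of_nat_numeral)
  obtain r where r: "absQ (z - of_rat r) < min (e/2) 1"
    using Q e unfolding is_padic_field_def by (metis half_gt_zero min_less_iff_conj zero_less_one)
  obtain u v where uv: "quotient_of r = (u, v)" by (cases "quotient_of r")
  have "absQ (of_rat r) \<le> absQ (of_rat r - z) + absQ z"
    using absval_triangle[OF av, of "of_rat r - z" z] by simp
  then have "absQ (of_rat r) < real p"
    using r z p2 absval_diff_commute[OF av, of z "of_rat r"] by linarith
  then have "\<not> int p dvd v"
    using Q padic_small_rat_denominator[OF P _ uv] by (simp add: is_padic_field_def)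
  moreover obtain M where M: "(1 / real p) ^ M < e/2"
    using real_arch_pow_inv[of "e/2" "1/real p"] e p2 by auto
  ultimately obtain k :: nat where "absQ (of_rat r - of_nat k) \<le> (1 / real p) ^ M"
    using p_integral_rat_near_nat[OF P Q uv] by blast
  then have "absQ (z - of_nat k) < e"
    using absval_diff_triangle[OF av, of z "of_nat k" "of_rat r"] r M by linarith
  then show ?thesis by blast
qed

lemma progression_dense_in_ball:
  fixes absQ :: "'q::field_char_0 \<Rightarrow> real"
  assumes P: "prime p" and Q: "is_padic_field p absQ"
    and h: "absQ h \<le> 1" and z: "absQ z \<le> 1" and d: "d > 0"
  shows "\<exists>j::nat. absQ ((a + of_nat j * h) - (a + h * z)) < d"
proof -
  have av: "is_absval absQ" using Q by (simp add: is_padic_field_def)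
  obtain j :: nat where j: "absQ (z - of_nat j) < d"
    using nat_dense_in_padic_unit_ball[OF P Q z d] by blast
  have "absQ ((a + of_nat j * h) - (a + h * z)) = absQ h * absQ (z - of_nat j)"
    using absval_mult[OF av, of h "z - of_nat j"] absval_diff_commute[OF av]
    by (simp add: algebra_simps)
  also have "\<dots> \<le> absQ (z - of_nat j)"
    using h absval_nonneg[OF av] by (simp add: mult_left_le_one_le)
  finally show ?thesis using j by (intro exI[of _ j]) linarith
qed

definition cont_at ::
  "('a \<Rightarrow> real) \<Rightarrow> ('b \<Rightarrow> real) \<Rightarrow> ('a::ab_group_add \<Rightarrow> 'b::ab_group_add) \<Rightarrow> 'a \<Rightarrow> bool" where
  "cont_at avA avB F x0 \<longleftrightarrow> (\<forall>e>0. \<exists>d>0. \<forall>y. avA (y - x0) < d \<longrightarrow> avB (F y - F x0) < e)"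

lemma abs_continuous_cont_at:
  "abs_continuous avA avB F \<longleftrightarrow> (\<forall>x. cont_at avA avB F x)"
  unfolding abs_continuous_def cont_at_def by blast

lemma cont_at_const:
  assumes "is_absval (avB :: 'b::field \<Rightarrow> real)"
  shows "cont_at avA avB (\<lambda>_. c) x0"
  unfolding cont_at_def using absval_eq_0[OF assms, of 0] by (auto intro: exI[of _ 1])

lemma cont_at_add:
  assumes B: "is_absval (avB :: 'b::field \<Rightarrow> real)"
    and F: "cont_at avA avB F x0" and G: "cont_at avA avB G x0"
  shows "cont_at avA avB (\<lambda>y. F y + G y) x0"
  unfolding cont_at_def
proof (intro allI impI)
  fix e :: real assume "e > 0"
  then have e: "e/2 > 0" by simp
  obtain d1 where d1: "d1 > 0" "\<forall>y. avA (y - x0) < d1 \<longrightarrow> avB (F y - F x0) < e/2"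
    using F e unfolding cont_at_def by blast
  obtain d2 where d2: "d2 > 0" "\<forall>y. avA (y - x0) < d2 \<longrightarrow> avB (G y - G x0) < e/2"
    using G e unfolding cont_at_def by blast
  have "avB (F y + G y - (F x0 + G x0)) < e" if y: "avA (y - x0) < min d1 d2" for y
  proof -
    have "F y + G y - (F x0 + G x0) = (F y - F x0) + (G y - G x0)" by simp
    then have "avB (F y + G y - (F x0 + G x0)) \<le> avB (F y - F x0) + avB (G y - G x0)"
      using absval_triangle[OF B] by metis
    moreover have "avB (F y - F x0) < e/2" "avB (G y - G x0) < e/2" using d1 d2 y by auto
    ultimately show ?thesis by linarith
  qed
  then show "\<exists>d>0. \<forall>y. avA (y - x0) < d \<longrightarrow> avB (F y + G y - (F x0 + G x0)) < e"
    using d1 d2 by (intro exI[of _ "min d1 d2"]) auto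
qed

text \<open>Continuity of a product: with \<open>|F y| \<le> a\<close> near \<open>x0\<close> and \<open>|G x0| \<le> b\<close>,
  \<open>|F y G y - F x0 G x0| \<le> a |G y - G x0| + b |F y - F x0|\<close>.\<close>
lemma cont_at_mult:
  assumes B: "is_absval (avB :: 'b::field \<Rightarrow> real)"
    and F: "cont_at avA avB F x0" and G: "cont_at avA avB G x0"
  shows "cont_at avA avB (\<lambda>y. F y * G y) x0"
  unfolding cont_at_def
proof (intro allI impI)
  fix e :: real assume e: "e > 0"
  define a where "a = avB (F x0) + 1"
  define b where "b = avB (G x0) + 1"
  have a: "a \<ge> 1" and b: "b \<ge> 1" using absval_nonneg[OF B] by (auto simp: a_def b_def)
  have e1: "min 1 (e / (2*b)) > 0" and e2: "e / (2*a) > 0" using e a b by auto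
  obtain d1 where d1: "d1 > 0" "\<forall>y. avA (y - x0) < d1 \<longrightarrow> avB (F y - F x0) < min 1 (e / (2*b))"
    using F e1 unfolding cont_at_def by blast
  obtain d2 where d2: "d2 > 0" "\<forall>y. avA (y - x0) < d2 \<longrightarrow> avB (G y - G x0) < e / (2*a)"
    using G e2 unfolding cont_at_def by blast
  have "avB (F y * G y - F x0 * G x0) < e" if y: "avA (y - x0) < min d1 d2" for y
  proof -
    have f1: "avB (F y - F x0) < 1" and f2: "avB (F y - F x0) < e / (2*b)"
      and g: "avB (G y - G x0) < e / (2*a)" using d1 d2 y by auto
    have "avB (F y) \<le> avB (F y - F x0) + avB (F x0)"
      using absval_triangle[OF B, of "F y - F x0" "F x0"] by simp
    then have Fy: "avB (F y) \<le> a" using f1 unfolding a_def by linarith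
    have "F y * G y - F x0 * G x0 = F y * (G y - G x0) + (F y - F x0) * G x0"
      by (simp add: algebra_simps)
    then have "avB (F y * G y - F x0 * G x0)
        \<le> avB (F y) * avB (G y - G x0) + avB (F y - F x0) * avB (G x0)"
      using absval_triangle[OF B] absval_mult[OF B] by metis
    moreover have "avB (F y) * avB (G y - G x0) < e/2"
    proof -
      have "avB (F y) * avB (G y - G x0) \<le> a * avB (G y - G x0)"
        using Fy absval_nonneg[OF B] by (intro mult_right_mono) auto
      also have "\<dots> < a * (e / (2*a))" using g a by (intro mult_strict_left_mono) auto
      also have "\<dots> = e/2" using a by (simp add: field_simps)
      finally show ?thesis .
    qed
    moreover have "avB (F y - F x0) * avB (G x0) \<le> e/2"
    proof -
      have "avB (F y - F x0) * avB (G x0) \<le> (e / (2*b)) * b"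
        using f2 absval_nonneg[OF B] e2 e1 by (intro mult_mono) (auto simp: b_def)
      also have "\<dots> = e/2" using b by (simp add: field_simps)
      finally show ?thesis .
    qed
    ultimately show ?thesis by linarith
  qed
  then show "\<exists>d>0. \<forall>y. avA (y - x0) < d \<longrightarrow> avB (F y * G y - F x0 * G x0) < e"
    using d1 d2 by (intro exI[of _ "min d1 d2"]) auto
qed

lemma cont_at_poly_comp:
  assumes B: "is_absval (avB :: 'b::field \<Rightarrow> real)" and I: "cont_at avA avB incl x0"
  shows "cont_at avA avB (\<lambda>y. poly P (incl y)) x0"
proof (induction P)
  case (pCons c P)
  have "cont_at avA avB (\<lambda>y. c + incl y * poly P (incl y)) x0"
    by (intro cont_at_add[OF B] cont_at_const[OF B] cont_at_mult[OF B] I pCons.IH)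
  then show ?case by simp
qed (simp add: cont_at_const[OF B])

lemma cont_at_eq_if_agree_nearby:
  assumes B: "is_absval (avB :: 'b::field \<Rightarrow> real)"
    and F: "cont_at avA avB F x0" and G: "cont_at avA avB G x0"
    and near: "\<And>d. d > 0 \<Longrightarrow> \<exists>y. avA (y - x0) < d \<and> F y = G y"
  shows "F x0 = G x0"
proof (rule ccontr)
  assume "F x0 \<noteq> G x0"
  define e where "e = avB (F x0 - G x0) / 2"
  have "avB (F x0 - G x0) \<noteq> 0"
    using \<open>F x0 \<noteq> G x0\<close> absval_eq_0[OF B, of "F x0 - G x0"] by simp
  then have "e > 0"
    using absval_nonneg[OF B, of "F x0 - G x0"] by (simp add: e_def)
  obtain d1 where d1: "d1 > 0" "\<forall>y. avA (y - x0) < d1 \<longrightarrow> avB (F y - F x0) < e"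
    using F \<open>e > 0\<close> unfolding cont_at_def by blast
  obtain d2 where d2: "d2 > 0" "\<forall>y. avA (y - x0) < d2 \<longrightarrow> avB (G y - G x0) < e"
    using G \<open>e > 0\<close> unfolding cont_at_def by blast
  obtain y where y: "avA (y - x0) < min d1 d2" "F y = G y"
    using near[of "min d1 d2"] d1 d2 by auto
  have "avB (F x0 - G x0) \<le> avB (F x0 - G y) + avB (G y - G x0)"
    by (rule absval_diff_triangle[OF B])
  also have "\<dots> = avB (F y - F x0) + avB (G y - G x0)"
    using y(2) absval_diff_commute[OF B, of "F x0" "F y"] by simp
  also have "\<dots> < 2 * e"
    using d1(2)[rule_format, of y] d2(2)[rule_format, of y] y(1) by linarith
  finally show False unfolding e_def by simp
qed

lemma poly_as_bounded_sum:
  fixes P :: "'a::comm_semiring_1 poly"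
  assumes "degree P \<le> n"
  shows "poly P y = (\<Sum>i\<le>n. coeff P i * y ^ i)"
proof -
  have "poly P y = poly (\<Sum>i\<le>n. monom (coeff P i) i) y"
    using poly_as_sum_of_monoms'[OF assms] by simp
  then show ?thesis by (simp add: poly_sum poly_monom)
qed

theorem corollary7:
  fixes p N n :: nat
    and absQ :: "'q::field_char_0 \<Rightarrow> real"
    and absK :: "'k::field \<Rightarrow> real"
    and incl :: "'q \<Rightarrow> 'k"
    and f :: "'q \<Rightarrow> 'k"
  assumes "prime p"
    and "is_padic_field p absQ"
    and "is_absval absK"
    and "field_embedding incl"
    and "abs_continuous absQ absK incl"
    and "abs_continuous absQ absK f"
    and "\<forall>x. fdiff ((of_nat p :: 'q) ^ N) (n + 1) f x = 0"
  shows "\<forall>a. \<exists>c :: nat \<Rightarrow> 'k. \<forall>x.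
           (\<exists>z. absQ z \<le> 1 \<and> x = a + (of_nat p) ^ N * z) \<longrightarrow>
           f x = (\<Sum>i\<le>n. c i * (incl x) ^ i)"
proof
  fix a :: 'q
  define h :: 'q where "h = of_nat p ^ N"
  have "h \<noteq> 0" using assms(1) prime_gt_0_nat by (simp add: h_def)
  moreover have "absQ h \<le> 1"
    using padic_abs_of_int_le_1[OF assms(1,2), of "int p ^ N"] by (simp add: h_def)
  moreover have "\<forall>x. fdiff h (Suc n) f x = 0" using assms(7) by (simp add: h_def)
  ultimately obtain Q where deg: "degree Q \<le> n"
    and on_progression: "\<forall>j. f (a + of_nat j * h) = poly Q (incl (a + of_nat j * h))"
    using fdiff_zero_polynomial_on_progression[OF assms(4)] by blast
  have "f x = poly Q (incl x)" if "absQ z \<le> 1" "x = a + h * z" for x z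
  proof (rule cont_at_eq_if_agree_nearby[OF assms(3), where F = f and G = "\<lambda>y. poly Q (incl y)"])
    show "cont_at absQ absK f x" "cont_at absQ absK (\<lambda>y. poly Q (incl y)) x"
      using assms(5,6) cont_at_poly_comp[OF assms(3), of absQ incl x Q]
      by (simp_all add: abs_continuous_cont_at)
    show "\<exists>y. absQ (y - x) < d \<and> f y = poly Q (incl y)" if "d > 0" for d
      using progression_dense_in_ball[OF assms(1,2) \<open>absQ h \<le> 1\<close>] on_progression
        \<open>absQ z \<le> 1\<close> \<open>x = a + h * z\<close> that by blast
  qed
  then show "\<exists>c. \<forall>x. (\<exists>z. absQ z \<le> 1 \<and> x = a + of_nat p ^ N * z) \<longrightarrow>
      f x = (\<Sum>i\<le>n. c i * incl x ^ i)"
    using poly_as_bounded_sum[OF deg] by (auto simp: h_def intro!: exI[of _ "coeff Q"])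
qed

end
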